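(* Let $\mathcal{C}=(\mathcal{N},\Omega,P)$ satisfy exchangeability (if state $\omega'$ permutes $\omega$ then $P(\omega')=P(\omega)$) and the information assumption: (a) if $s_i=s^0$ then $P(v,s)=P(v,s_{-i})P(s_i)$, and (b) if $s_i\neq s^0$ then $V_i^d(s)>0$ if and only if $V_i^d(s_i)>0$. Then, for any state $\omega=(v,s)\in\Omega$, $P(\omega)=\lambda^{M(s)}(1-\lambda)^{n-M(s)}\sum_{s'\in C(s)}P_{\mathcal{I}}(v,s')$. Moreover, if $\sigma\in\Sigma^*$, then in each term of $\Pi_i(\mathcal{C},\sigma)=\sum_{g=0}^{\tau}\sum_{m=g}^{\tau+g}p_i(\sigma\mid g,m)P(M=m\mid S_i=s^0)Z(g,m)$, $P(M=m\mid S_i=s^0)$ depends only on $\lambda$, $p_i(\sigma\mid g,m)$ depends only on $\sigma$, and $Z(g,m)$ depends only on $P_{\mathcal{I}}$.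
   Context: $n$ voters (odd), $\tau=\frac{n-1}{2}$, two policies $p^*,p_*$ chosen by simple majority; finite state space $\Omega=\mathcal{V}^n\times\mathcal{S}^n$ with signal set $\mathcal{S}=\{s^0,\dots,s^K\}$, informative signals $\mathcal{M}=\{s^1,\dots,s^K\}$; $V_i^d=V_i^{p^*}-V_i^{p_*}$ and $V_i^d(E)$ its conditional expectation given event $E$. $\lambda=P(S_i\in\mathcal{M})$; $P_{\mathcal{I}}(\cdot)=P(\cdot\mid S\in\mathcal{M}^n)$; $M(s)$ is the number of voters with informative signals; $I(s)$ the set of such voters; $C(s)=\{s'\in\mathcal{M}^n: s'_i=s_i\ \forall i\in I(s)\}$. $\Sigma^*$ is the set of strategy profiles in which voters with good news (signals $s^k$ with $V_i^d(S_i=s^k)>0$) vote $p^*$ and voters with bad news vote $p_*$; $\sigma_i$ is voter $i$'s probability of voting $p^*$ on $s^0$. $\Pi_i(\mathcal{C},\sigma)$ is the expected payoff difference between voting $p^*$ and $p_*$ for voter $i$ with signal $s^0$; $p_i(\sigma\mid g,m)$ is the probability that exactly $\tau$ of the other voters vote $p^*$ given $G=g$ others with good news, $M=m$ others informed, and $S_i=s^0$; $Z(g,m)=P(G=g\mid M=m)V_i^d(G=g,M=m,S_i=s^0)$. *)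

theory Defs
  imports Complex_Main "HOL-Library.FuncSet" "HOL-Combinatorics.Permutations"
begin

(* Voters are 0,...,n-1.  A valuation v_i is a pair (V_i^{p*}, V_i^{p_*}) from a finite set Vs.
   Signals are 0..K; signal 0 is s^0 (uninformative), 1..K are the informative signals. *)
type_synonym state = "(nat \<Rightarrow> real \<times> real) \<times> (nat \<Rightarrow> nat)"

definition Om :: "nat \<Rightarrow> (real \<times> real) set \<Rightarrow> nat \<Rightarrow> state set" where
  "Om n Vs K = (PiE {..<n} (\<lambda>_. Vs)) \<times> (PiE {..<n} (\<lambda>_. {0..K}))"

definition tau :: "nat \<Rightarrow> nat" where
  "tau n = (n - 1) div 2"

definition prb :: "nat \<Rightarrow> (real \<times> real) set \<Rightarrow> nat \<Rightarrow> (state \<Rightarrow> real) \<Rightarrow> state set \<Rightarrow> real" where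
  "prb n Vs K P E = (\<Sum>\<omega>\<in>Om n Vs K \<inter> E. P \<omega>)"

definition cprob :: "nat \<Rightarrow> (real \<times> real) set \<Rightarrow> nat \<Rightarrow> (state \<Rightarrow> real) \<Rightarrow> state set \<Rightarrow> state set \<Rightarrow> real" where
  "cprob n Vs K P A B = prb n Vs K P (A \<inter> B) / prb n Vs K P B"

definition cexp :: "nat \<Rightarrow> (real \<times> real) set \<Rightarrow> nat \<Rightarrow> (state \<Rightarrow> real) \<Rightarrow> (state \<Rightarrow> real) \<Rightarrow> state set \<Rightarrow> real" where
  "cexp n Vs K P X E = (\<Sum>\<omega>\<in>Om n Vs K \<inter> E. P \<omega> * X \<omega>) / prb n Vs K P E"

definition Vd :: "nat \<Rightarrow> state \<Rightarrow> real" where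
  "Vd i \<omega> = fst (fst \<omega> i) - snd (fst \<omega> i)"

definition is_pmf :: "nat \<Rightarrow> (real \<times> real) set \<Rightarrow> nat \<Rightarrow> (state \<Rightarrow> real) \<Rightarrow> bool" where
  "is_pmf n Vs K P \<longleftrightarrow> (\<forall>\<omega>\<in>Om n Vs K. 0 \<le> P \<omega>) \<and> (\<Sum>\<omega>\<in>Om n Vs K. P \<omega>) = 1"

definition exchangeable :: "nat \<Rightarrow> (real \<times> real) set \<Rightarrow> nat \<Rightarrow> (state \<Rightarrow> real) \<Rightarrow> bool" where
  "exchangeable n Vs K P \<longleftrightarrow>
     (\<forall>\<pi> v s. \<pi> permutes {..<n} \<longrightarrow> (v, s) \<in> Om n Vs K \<longrightarrow> P (v \<circ> \<pi>, s \<circ> \<pi>) = P (v, s))"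

definition info_assumption :: "nat \<Rightarrow> (real \<times> real) set \<Rightarrow> nat \<Rightarrow> (state \<Rightarrow> real) \<Rightarrow> bool" where
  "info_assumption n Vs K P \<longleftrightarrow>
     (\<forall>i<n. \<forall>v s. (v, s) \<in> Om n Vs K \<longrightarrow> s i = 0 \<longrightarrow>
        P (v, s) = (\<Sum>t\<in>{0..K}. P (v, s(i := t))) * prb n Vs K P {\<omega>. snd \<omega> i = 0})
   \<and> (\<forall>i<n. \<forall>v s. (v, s) \<in> Om n Vs K \<longrightarrow> s i \<noteq> 0 \<longrightarrow>
        prb n Vs K P {\<omega>. snd \<omega> = s} > 0 \<longrightarrow>
        (cexp n Vs K P (Vd i) {\<omega>. snd \<omega> = s} > 0 \<longleftrightarrow>
         cexp n Vs K P (Vd i) {\<omega>. snd \<omega> i = s i} > 0))"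

(* lambda = P(S_i in M); by exchangeability independent of i, we use voter 0 *)
definition lam :: "nat \<Rightarrow> (real \<times> real) set \<Rightarrow> nat \<Rightarrow> (state \<Rightarrow> real) \<Rightarrow> real" where
  "lam n Vs K P = prb n Vs K P {\<omega>. snd \<omega> 0 \<noteq> 0}"

definition PI :: "nat \<Rightarrow> (real \<times> real) set \<Rightarrow> nat \<Rightarrow> (state \<Rightarrow> real) \<Rightarrow> state \<Rightarrow> real" where
  "PI n Vs K P \<omega> =
     (if \<forall>i<n. snd \<omega> i \<noteq> 0
      then P \<omega> / prb n Vs K P {\<omega>'. \<forall>i<n. snd \<omega>' i \<noteq> 0} else 0)"

definition Msig :: "nat \<Rightarrow> (nat \<Rightarrow> nat) \<Rightarrow> nat" where
  "Msig n s = card {i. i < n \<and> s i \<noteq> 0}"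

definition Cset :: "nat \<Rightarrow> nat \<Rightarrow> (nat \<Rightarrow> nat) \<Rightarrow> (nat \<Rightarrow> nat) set" where
  "Cset n K s = {s' \<in> PiE {..<n} (\<lambda>_. {1..K}). \<forall>i<n. s i \<noteq> 0 \<longrightarrow> s' i = s i}"

definition good_news :: "nat \<Rightarrow> (real \<times> real) set \<Rightarrow> nat \<Rightarrow> (state \<Rightarrow> real) \<Rightarrow> nat \<Rightarrow> nat \<Rightarrow> bool" where
  "good_news n Vs K P j k \<longleftrightarrow> k \<noteq> 0 \<and> cexp n Vs K P (Vd j) {\<omega>. snd \<omega> j = k} > 0"

definition Gcnt :: "nat \<Rightarrow> (real \<times> real) set \<Rightarrow> nat \<Rightarrow> (state \<Rightarrow> real) \<Rightarrow> nat \<Rightarrow> state \<Rightarrow> nat" where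
  "Gcnt n Vs K P i \<omega> = card {j. j < n \<and> j \<noteq> i \<and> good_news n Vs K P j (snd \<omega> j)}"

definition Mcnt :: "nat \<Rightarrow> nat \<Rightarrow> state \<Rightarrow> nat" where
  "Mcnt n i \<omega> = card {j. j < n \<and> j \<noteq> i \<and> snd \<omega> j \<noteq> 0}"

definition Ev :: "nat \<Rightarrow> (real \<times> real) set \<Rightarrow> nat \<Rightarrow> (state \<Rightarrow> real) \<Rightarrow> nat \<Rightarrow> nat \<Rightarrow> nat \<Rightarrow> state set" where
  "Ev n Vs K P i g m =
     {\<omega>. Gcnt n Vs K P i \<omega> = g \<and> Mcnt n i \<omega> = m \<and> snd \<omega> i = 0}"

definition exact_yes :: "(nat \<Rightarrow> real) \<Rightarrow> nat set \<Rightarrow> nat \<Rightarrow> real" where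
  "exact_yes \<sigma> U k = (\<Sum>A\<in>{A. A \<subseteq> U \<and> card A = k}. (\<Prod>j\<in>A. \<sigma> j) * (\<Prod>j\<in>U - A. 1 - \<sigma> j))"

(* p_i(sigma | g, m), for the profile in Sigma^* determined by sigma: voters with good news vote p*,
   voters with bad news vote p_*, voter j with signal s^0 votes p* with probability sigma j.
   It is the probability that exactly tau of the other voters vote p*, given G = g, M = m, S_i = s^0. *)
definition pivot_prob :: "nat \<Rightarrow> (real \<times> real) set \<Rightarrow> nat \<Rightarrow> (state \<Rightarrow> real) \<Rightarrow> (nat \<Rightarrow> real)
     \<Rightarrow> nat \<Rightarrow> nat \<Rightarrow> nat \<Rightarrow> real" where
  "pivot_prob n Vs K P \<sigma> i g m =
     (\<Sum>\<omega>\<in>Om n Vs K \<inter> Ev n Vs K P i g m.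
        P \<omega> * (if Gcnt n Vs K P i \<omega> \<le> tau n
               then exact_yes \<sigma> {j. j < n \<and> j \<noteq> i \<and> snd \<omega> j = 0} (tau n - Gcnt n Vs K P i \<omega>)
               else 0))
     / prb n Vs K P (Ev n Vs K P i g m)"

definition Zfun :: "nat \<Rightarrow> (real \<times> real) set \<Rightarrow> nat \<Rightarrow> (state \<Rightarrow> real) \<Rightarrow> nat \<Rightarrow> nat \<Rightarrow> nat \<Rightarrow> real" where
  "Zfun n Vs K P i g m =
     cprob n Vs K P {\<omega>. Gcnt n Vs K P i \<omega> = g} {\<omega>. Mcnt n i \<omega> = m}
     * cexp n Vs K P (Vd i) (Ev n Vs K P i g m)"

end

theory Submission
  imports Defs
begin

(*
  Part (a) of the information assumption, applied to one uninformed voter at a time, trades a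
  factor (1 - lambda) / lambda for a sum over the informative signals of that voter; here
  P(S_i = s^0) = 1 - lambda for every i by exchangeability. Hence lambda^n P(v, s) equals
  lambda^M (1 - lambda)^(n - M) times the mass of the fully informed states completing s, and
  summing over all states shows that the fully informed states carry mass lambda^n.

  Equivalently, P is the law of a state drawn from P_I whose voters are then silenced
  independently with probability 1 - lambda. In this mixture the law of M given S_i = s^0 is
  binomial with parameters n - 1 and lambda; conditional expectations given an informative signal,
  and hence good news, G and Z(g, m), are ratios of P_I-sums in which the silencing weights cancel;
  and given (G, M, S_i = s^0), exchangeability makes the set of uninformed other voters uniform
  among the sets of its size, so p_i(sigma | g, m) is an average that involves sigma only.
*)

(* When each of n voters is silenced independently with probability 1 - l, the probability
   that the silenced voters are exactly a given set of k of them. *)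
definition silence_weight :: "real \<Rightarrow> nat \<Rightarrow> nat \<Rightarrow> real" where
  "silence_weight l n k = l ^ (n - k) * (1 - l) ^ k"

lemma sum_silence_weight_Pow:
  assumes "finite A"
  shows "(\<Sum>Z\<in>Pow A. silence_weight l (card A) (card Z)) = 1"
proof -
  have "(\<Sum>Z\<in>Pow A. silence_weight l (card A) (card Z))
      = (\<Sum>Z\<in>Pow A. (\<Prod>_\<in>Z. 1 - l) * (\<Prod>_\<in>A - Z. l))"
    using assms by (intro sum.cong) (auto simp: silence_weight_def card_Diff_subset finite_subset)
  also have "\<dots> = (\<Prod>_\<in>A. (1 - l) + l)"
    by (rule prod_add[symmetric]) fact
  finally show ?thesis by simp
qed

lemma silence_weight_add_Suc:
  assumes "k < n"
  shows "silence_weight l n k + silence_weight l n (Suc k) = silence_weight l (n - 1) k"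
proof -
  obtain d where d: "n - Suc k = d" "n - k = Suc d" "n - 1 - k = d" using assms by auto
  show ?thesis unfolding silence_weight_def d by (simp add: algebra_simps)
qed

lemma sum_Pow_factor_card:
  fixes w :: "nat \<Rightarrow> real"
  assumes "\<And>Z. Z \<subseteq> A \<Longrightarrow> card Z \<noteq> k \<Longrightarrow> F Z = 0"
  shows "(\<Sum>Z\<in>Pow A. w (card Z) * F Z) = w k * (\<Sum>Z\<in>Pow A. F Z)"
  unfolding sum_distrib_left
proof (intro sum.cong refl)
  fix Z assume "Z \<in> Pow A"
  then show "w (card Z) * F Z = w k * F Z" using assms[of Z] by (cases "card Z = k") auto
qed

lemma card_Pow_member_complement:
  assumes "finite A" "i \<in> A"
  shows "card {Z \<in> Pow A. i \<in> Z \<and> card (A - {i} - Z) = m} = (card A - 1) choose m"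
proof -
  have complement: "A - insert i (A - W) = W" if "W \<subseteq> A - {i}" for W
    using that by auto
  have "bij_betw (\<lambda>Z. A - Z) {Z \<in> Pow A. i \<in> Z \<and> card (A - {i} - Z) = m}
      {W. W \<subseteq> A - {i} \<and> card W = m}"
  proof (rule bij_betw_byWitness[where f' = "\<lambda>W. A - W"])
    show "(\<lambda>Z. A - Z) ` {Z \<in> Pow A. i \<in> Z \<and> card (A - {i} - Z) = m}
        \<subseteq> {W. W \<subseteq> A - {i} \<and> card W = m}"
      by (auto simp: Diff_insert2[symmetric] insert_absorb)
  qed (use assms complement in \<open>auto simp: Diff_insert2[symmetric] insert_absorb\<close>)
  then have "card {Z \<in> Pow A. i \<in> Z \<and> card (A - {i} - Z) = m}
      = card {W. W \<subseteq> A - {i} \<and> card W = m}"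
    by (rule bij_betw_same_card)
  also have "\<dots> = (card A - 1) choose m"
    using assms by (simp add: n_subsets)
  finally show ?thesis .
qed

lemma permutes_exists_image:
  assumes "finite A" "Y \<subseteq> A" "Y' \<subseteq> A" "card Y = card Y'"
  obtains p where "p permutes A" "p ` Y = Y'"
proof -
  have fin: "finite Y" "finite Y'" using assms finite_subset by auto
  obtain f where f: "bij_betw f Y Y'" using finite_same_card_bij[OF fin assms(4)] by blast
  have "card (A - Y) = card (A - Y')" using assms fin by (simp add: card_Diff_subset)
  then obtain g where g: "bij_betw g (A - Y) (A - Y')" using finite_same_card_bij assms(1) by blast
  define p where "p x = (if x \<in> Y then f x else if x \<in> A then g x else x)" for x
  have "bij_betw p Y Y'" using f by (subst bij_betw_cong[of Y p f]) (auto simp: p_def)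
  moreover have "bij_betw p (A - Y) (A - Y')"
    using g by (subst bij_betw_cong[of "A - Y" p g]) (auto simp: p_def)
  ultimately have "bij_betw p (Y \<union> (A - Y)) (Y' \<union> (A - Y'))" by (rule bij_betw_combine) auto
  moreover have "Y \<union> (A - Y) = A" "Y' \<union> (A - Y') = A" using assms by auto
  ultimately have "p permutes A" by (intro bij_imp_permutes) (auto simp: p_def)
  moreover have "p ` Y = Y'" using \<open>bij_betw p Y Y'\<close> by (simp add: bij_betw_def)
  ultimately show thesis by (rule that)
qed

lemma image_Collect_permutes:
  assumes "p permutes A"
  shows "p ` {j \<in> A. Q (p j)} = {j \<in> A. Q j}"
proof (intro equalityI subsetI)
  fix x assume "x \<in> {j \<in> A. Q j}"
  moreover have "p (inv p x) = x" "(inv p x \<in> A) = (x \<in> A)"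
    using permutes_inverses(1)[OF assms] permutes_in_image[OF permutes_inv[OF assms]] by auto
  ultimately show "x \<in> p ` {j \<in> A. Q (p j)}"
    by (metis (mono_tags, lifting) image_eqI mem_Collect_eq)
qed (use permutes_in_image[OF assms] in auto)

lemma card_Collect_permutes:
  assumes "p permutes A"
  shows "card {j \<in> A. Q (p j)} = card {j \<in> A. Q j}"
  using card_image[OF permutes_inj_on[OF assms]] image_Collect_permutes[OF assms] by metis

lemma card_by_complement_others:
  assumes "Z \<subseteq> {..<n}" "i \<in> Z" "card ({..<n} - {i} - Z) = m"
  shows "card Z = n - m" "m < n"
proof -
  have "finite Z" using assms(1) finite_subset by blast
  have "{..<n} - {i} - Z = {..<n} - Z" using assms(2) by auto
  then have "m = n - card Z" using assms \<open>finite Z\<close> by (simp add: card_Diff_subset)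
  moreover have "0 < card Z" "card Z \<le> n"
    using assms \<open>finite Z\<close> card_mono[of "{..<n}" Z] by (auto simp: card_gt_0_iff)
  ultimately show "card Z = n - m" "m < n" by auto
qed

section \<open>Permuting and silencing voters\<close>

definition permute_state :: "(nat \<Rightarrow> nat) \<Rightarrow> state \<Rightarrow> state" where
  "permute_state p \<omega> = (fst \<omega> \<circ> p, snd \<omega> \<circ> p)"

definition silence :: "nat set \<Rightarrow> state \<Rightarrow> state" where
  "silence Z \<omega> = (fst \<omega>, \<lambda>j. if j \<in> Z then 0 else snd \<omega> j)"

definition uninformed :: "nat \<Rightarrow> (nat \<Rightarrow> nat) \<Rightarrow> nat set" where
  "uninformed n s = {j. j < n \<and> s j = 0}"

definition Om_informed :: "nat \<Rightarrow> (real \<times> real) set \<Rightarrow> nat \<Rightarrow> state set" where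
  "Om_informed n Vs K = Om n Vs K \<inter> {\<omega>. \<forall>i<n. snd \<omega> i \<noteq> 0}"

definition informed_completions ::
    "nat \<Rightarrow> nat \<Rightarrow> (nat \<Rightarrow> nat) \<Rightarrow> nat set \<Rightarrow> (nat \<Rightarrow> nat) set" where
  "informed_completions n K s J =
     {t \<in> PiE {..<n} (\<lambda>_. {0..K}). (\<forall>j\<in>J. t j \<noteq> 0) \<and> (\<forall>j. j \<notin> J \<longrightarrow> t j = s j)}"

lemma finite_Om: "finite Vs \<Longrightarrow> finite (Om n Vs K)"
  unfolding Om_def by (intro finite_cartesian_product finite_PiE) auto

lemma finite_Cset: "finite (Cset n K s)"
  unfolding Cset_def by (rule finite_subset[OF _ finite_PiE[of "{..<n}" "\<lambda>_. {1..K}"]]) auto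

lemma finite_informed_completions: "finite (informed_completions n K s J)"
  unfolding informed_completions_def
  by (rule finite_subset[OF _ finite_PiE[of "{..<n}" "\<lambda>_. {0..K}"]]) auto

lemma sum_Om_Int_eq:
  fixes P h :: "state \<Rightarrow> real"
  assumes "finite Vs"
  shows "(\<Sum>\<omega>\<in>Om n Vs K \<inter> E. P \<omega> * h \<omega>) = (\<Sum>\<omega>\<in>Om n Vs K. P \<omega> * (of_bool (\<omega> \<in> E) * h \<omega>))"
  unfolding sum.inter_restrict[OF finite_Om[OF assms]] by (intro sum.cong) auto

lemma prb_eq_sum_of_bool:
  assumes "finite Vs"
  shows "prb n Vs K P E = (\<Sum>\<omega>\<in>Om n Vs K. P \<omega> * of_bool (\<omega> \<in> E))"
  unfolding prb_def sum.inter_restrict[OF finite_Om[OF assms]] by (intro sum.cong) auto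

lemma permute_state_in_Om:
  assumes "p permutes {..<n}" "\<omega> \<in> Om n Vs K"
  shows "permute_state p \<omega> \<in> Om n Vs K"
  using assms permutes_in_image[OF assms(1)] permutes_not_in[OF assms(1)]
  by (cases \<omega>) (auto simp: permute_state_def Om_def PiE_def Pi_def extensional_def)

lemma permute_state_inv:
  assumes "p permutes A"
  shows "permute_state (inv p) (permute_state p \<omega>) = \<omega>"
    and "permute_state p (permute_state (inv p) \<omega>) = \<omega>"
  using assms by (auto simp: permute_state_def comp_assoc permutes_inv_o)

lemma informed_completions_uninformed:
  assumes "s \<in> PiE {..<n} (\<lambda>_. {0..K})"
  shows "informed_completions n K s (uninformed n s) = Cset n K s"
proof (intro set_eqI iffI)
  fix t
  assume t: "t \<in> informed_completions n K s (uninformed n s)"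
  have "t j \<in> {1..K}" if "j < n" for j
    using t that PiE_mem[OF assms, of j]
    by (cases "s j = 0") (auto simp: informed_completions_def uninformed_def PiE_iff)
  then show "t \<in> Cset n K s"
    using t by (auto simp: Cset_def PiE_iff informed_completions_def uninformed_def)
next
  fix t
  assume t: "t \<in> Cset n K s"
  have "t j = s j" if "j \<notin> uninformed n s" for j
    using t that assms
    by (cases "j < n") (auto simp: Cset_def uninformed_def PiE_iff extensional_def)
  then show "t \<in> informed_completions n K s (uninformed n s)"
    using t by (auto simp: informed_completions_def Cset_def uninformed_def PiE_iff Suc_le_eq)
qed

lemma snd_silence: "snd (silence Z \<omega>) j = (if j \<in> Z then 0 else snd \<omega> j)"
  by (simp add: silence_def)

lemma Vd_silence: "Vd i (silence Z \<omega>) = Vd i \<omega>"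
  by (simp add: Vd_def silence_def)

lemma silence_insert: "silence (insert i Z) \<omega> = (fst (silence Z \<omega>), (snd (silence Z \<omega>))(i := 0))"
  by (auto simp: silence_def)

lemma Mcnt_silence:
  assumes "\<omega> \<in> Om_informed n Vs K"
  shows "Mcnt n i (silence Z \<omega>) = card ({..<n} - {i} - Z)"
proof -
  have "{j. j < n \<and> j \<noteq> i \<and> snd (silence Z \<omega>) j \<noteq> 0} = {..<n} - {i} - Z"
    using assms by (auto simp: Om_informed_def silence_def)
  then show ?thesis unfolding Mcnt_def by simp
qed

lemma sum_Om_Cset_eq_sum_silence:
  fixes h :: "nat set \<Rightarrow> real" and g f :: "state \<Rightarrow> real"
  assumes "finite Vs"
  shows "(\<Sum>\<omega>\<in>Om n Vs K. h (uninformed n (snd \<omega>)) * (\<Sum>t\<in>Cset n K (snd \<omega>). g (fst \<omega>, t)) * f \<omega>)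
       = (\<Sum>Z\<in>Pow {..<n}. h Z * (\<Sum>\<omega>\<in>Om_informed n Vs K. g \<omega> * f (silence Z \<omega>)))"
proof -
  have restore: "(\<lambda>j. if j \<in> uninformed n s then 0 else t j) = s"
    if "s \<in> PiE {..<n} (\<lambda>_. {0..K})" "t \<in> Cset n K s" for s t
  proof
    fix j show "(if j \<in> uninformed n s then 0 else t j) = s j"
      using that by (cases "j < n") (auto simp: uninformed_def Cset_def PiE_def extensional_def)
  qed
  have "(\<Sum>\<omega>\<in>Om n Vs K. h (uninformed n (snd \<omega>)) * (\<Sum>t\<in>Cset n K (snd \<omega>). g (fst \<omega>, t)) * f \<omega>)
      = (\<Sum>(\<omega>, t)\<in>Sigma (Om n Vs K) (\<lambda>\<omega>. Cset n K (snd \<omega>)).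
           h (uninformed n (snd \<omega>)) * g (fst \<omega>, t) * f \<omega>)"
    by (subst sum.Sigma[symmetric])
      (auto simp: finite_Om[OF assms] finite_Cset sum_distrib_left sum_distrib_right
        intro!: sum.cong)
  also have "\<dots> = (\<Sum>(Z, \<omega>)\<in>Pow {..<n} \<times> Om_informed n Vs K. h Z * g \<omega> * f (silence Z \<omega>))"
  proof (rule sum.reindex_bij_witness[where i = "\<lambda>(Z, \<omega>). (silence Z \<omega>, snd \<omega>)"
        and j = "\<lambda>(\<omega>, t). (uninformed n (snd \<omega>), (fst \<omega>, t))"], goal_cases)
    case (1 a)
    obtain v s t where a: "a = ((v, s), t)" by (metis prod.collapse)
    show ?case using 1 restore unfolding a Om_def by (simp add: silence_def)
  next
    case (2 a)
    obtain v s t where a: "a = ((v, s), t)" by (metis prod.collapse)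
    show ?case using 2 unfolding a uninformed_def Om_informed_def Om_def Cset_def
      by (auto simp: PiE_def Pi_def)
  next
    case (3 b)
    obtain Z v t where b: "b = (Z, (v, t))" by (metis prod.collapse)
    have "uninformed n (\<lambda>j. if j \<in> Z then 0 else t j) = Z"
      using 3 unfolding b uninformed_def Om_informed_def by auto
    then show ?case unfolding b by (simp add: silence_def cong: if_cong)
  next
    case (4 b)
    obtain Z v t where b: "b = (Z, (v, t))" by (metis prod.collapse)
    show ?case using 4 unfolding b silence_def Om_informed_def Om_def Cset_def
      by (auto simp: PiE_def Pi_def extensional_def subset_eq)
  next
    case (5 a)
    obtain v s t where a: "a = ((v, s), t)" by (metis prod.collapse)
    show ?case using 5 restore unfolding a Om_def by (simp add: silence_def)
  qed
  also have "\<dots> = (\<Sum>Z\<in>Pow {..<n}. h Z * (\<Sum>\<omega>\<in>Om_informed n Vs K. g \<omega> * f (silence Z \<omega>)))"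
    by (subst sum.cartesian_product[symmetric]) (auto simp: sum_distrib_left mult.assoc)
  finally show ?thesis .
qed

lemma silence_weight_uninformed:
  "silence_weight l n (card (uninformed n s)) = l ^ Msig n s * (1 - l) ^ (n - Msig n s)"
proof -
  have "uninformed n s = {..<n} - {i. i < n \<and> s i \<noteq> 0}" by (auto simp: uninformed_def)
  then have "card (uninformed n s) = n - Msig n s"
    unfolding Msig_def by (simp add: card_Diff_subset subset_eq)
  moreover have "Msig n s \<le> n"
    unfolding Msig_def using card_mono[of "{..<n}" "{i. i < n \<and> s i \<noteq> 0}"] by auto
  ultimately show ?thesis by (simp add: silence_weight_def)
qed

lemma Mcnt_fun_upd_self: "Mcnt n i (v, s(i := t)) = Mcnt n i (v, s)"
  unfolding Mcnt_def by (metis fun_upd_other snd_conv)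

lemma Gcnt_fun_upd_self: "Gcnt n Vs K P i (v, s(i := t)) = Gcnt n Vs K P i (v, s)"
  unfolding Gcnt_def by (metis fun_upd_other snd_conv)

lemma card_uninformed_others:
  assumes "i < n"
  shows "card (uninformed n (snd \<omega>) - {i}) = n - 1 - Mcnt n i \<omega>"
proof -
  have "uninformed n (snd \<omega>) - {i} = ({..<n} - {i}) - {j. j < n \<and> j \<noteq> i \<and> snd \<omega> j \<noteq> 0}"
    by (auto simp: uninformed_def)
  then show ?thesis
    using assms unfolding Mcnt_def by (simp add: card_Diff_subset subset_eq)
qed

lemma Mcnt_permute_state:
  assumes "p permutes ({..<n} - {i})"
  shows "Mcnt n i (permute_state p \<omega>) = Mcnt n i \<omega>"
proof -
  have "{j. j < n \<and> j \<noteq> i \<and> snd \<omega> j \<noteq> 0} = {j \<in> {..<n} - {i}. snd \<omega> j \<noteq> 0}" by auto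
  moreover have "{j. j < n \<and> j \<noteq> i \<and> snd (permute_state p \<omega>) j \<noteq> 0}
      = {j \<in> {..<n} - {i}. snd \<omega> (p j) \<noteq> 0}"
    by (auto simp: permute_state_def)
  ultimately show ?thesis
    unfolding Mcnt_def using card_Collect_permutes[OF assms, of "\<lambda>j. snd \<omega> j \<noteq> 0"] by simp
qed

lemma uninformed_permute_state:
  assumes "p permutes ({..<n} - {i})"
  shows "p ` (uninformed n (snd (permute_state p \<omega>)) - {i}) = uninformed n (snd \<omega>) - {i}"
proof -
  have "uninformed n (snd (permute_state p \<omega>)) - {i} = {j \<in> {..<n} - {i}. snd \<omega> (p j) = 0}"
    by (auto simp: uninformed_def permute_state_def)
  moreover have "uninformed n (snd \<omega>) - {i} = {j \<in> {..<n} - {i}. snd \<omega> j = 0}"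
    by (auto simp: uninformed_def)
  ultimately show ?thesis using image_Collect_permutes[OF assms] by simp
qed

definition silenced_sum ::
    "nat \<Rightarrow> (real \<times> real) set \<Rightarrow> nat \<Rightarrow> (state \<Rightarrow> real) \<Rightarrow> nat set \<Rightarrow> (state \<Rightarrow> real) \<Rightarrow> real" where
  "silenced_sum n Vs K Q A f = (\<Sum>Z\<in>Pow A. \<Sum>\<omega>\<in>Om_informed n Vs K. Q \<omega> * f (silence Z \<omega>))"

lemma silenced_sum_cong:
  assumes "\<forall>\<omega>\<in>Om n Vs K. Q' \<omega> = Q \<omega>"
  shows "silenced_sum n Vs K Q' A f = silenced_sum n Vs K Q A f"
  using assms unfolding silenced_sum_def Om_informed_def by simp

locale signal_model =
  fixes n :: nat and Vs :: "(real \<times> real) set" and K :: nat and P :: "state \<Rightarrow> real"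
  assumes finite_Vs: "finite Vs" and n_pos: "0 < n" and pmf: "is_pmf n Vs K P"
    and exch: "exchangeable n Vs K P" and info: "info_assumption n Vs K P"
begin

abbreviation lm :: real where "lm \<equiv> lam n Vs K P"

lemma P_permute_state:
  assumes "p permutes {..<n}" "\<omega> \<in> Om n Vs K"
  shows "P (permute_state p \<omega>) = P \<omega>"
proof -
  have "P (fst \<omega> \<circ> p, snd \<omega> \<circ> p) = P (fst \<omega>, snd \<omega>)"
    using exch assms unfolding exchangeable_def by simp
  then show ?thesis by (simp add: permute_state_def)
qed

lemma sum_permute_state:
  assumes "p permutes {..<n}"
  shows "(\<Sum>\<omega>\<in>Om n Vs K \<inter> E. P \<omega> * f \<omega>)
       = (\<Sum>\<omega>\<in>Om n Vs K \<inter> {\<omega>. permute_state p \<omega> \<in> E}. P \<omega> * f (permute_state p \<omega>))"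
proof (rule sum.reindex_bij_witness[where j = "permute_state (inv p)" and i = "permute_state p"],
    goal_cases)
  case (5 \<omega>)
  then have "P (permute_state (inv p) \<omega>) = P \<omega>"
    using P_permute_state[OF permutes_inv[OF assms]] by blast
  then show ?case by (simp only: permute_state_inv(2)[OF assms])
next
  case (2 \<omega>)
  then show ?case
    using permute_state_in_Om[OF permutes_inv[OF assms]] permute_state_inv(2)[OF assms] by auto
next
  case (4 \<omega>)
  then show ?case using permute_state_in_Om[OF assms] by auto
qed (simp_all only: permute_state_inv[OF assms])

lemma prb_permute_state:
  assumes "p permutes {..<n}"
  shows "prb n Vs K P E = prb n Vs K P {\<omega>. permute_state p \<omega> \<in> E}"
  using sum_permute_state[OF assms, where E = E and f = "\<lambda>_. 1"]
  unfolding prb_def by (simp only: mult_1_right)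

lemma prb_informed:
  assumes "j < n"
  shows "prb n Vs K P {\<omega>. snd \<omega> j \<noteq> 0} = lm"
proof -
  have p: "transpose 0 j permutes {..<n}" using assms n_pos by (intro permutes_swap_id) auto
  have "{\<omega>. permute_state (transpose 0 j) \<omega> \<in> {\<omega>. snd \<omega> 0 \<noteq> 0}} = {\<omega>. snd \<omega> j \<noteq> 0}"
    by (auto simp: permute_state_def)
  then show ?thesis
    using prb_permute_state[OF p, of "{\<omega>. snd \<omega> 0 \<noteq> 0}"] by (simp only: lam_def)
qed

lemma prb_uninformed:
  assumes "j < n"
  shows "prb n Vs K P {\<omega>. snd \<omega> j = 0} = 1 - lm"
proof -
  have "Om n Vs K - {\<omega>. snd \<omega> j = 0} = Om n Vs K \<inter> {\<omega>. snd \<omega> j \<noteq> 0}" by auto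
  then have "prb n Vs K P {\<omega>. snd \<omega> j = 0} + prb n Vs K P {\<omega>. snd \<omega> j \<noteq> 0} = 1"
    using pmf sum.Int_Diff[OF finite_Om[OF finite_Vs], where g = P and B = "{\<omega>. snd \<omega> j = 0}"]
    unfolding is_pmf_def prb_def by simp
  then show ?thesis using prb_informed[OF assms] by linarith
qed

lemma lam_mul_P_uninformed:
  assumes "i < n" "(v, s) \<in> Om n Vs K" "s i = 0"
  shows "lm * P (v, s) = (1 - lm) * (\<Sum>k\<in>{1..K}. P (v, s(i := k)))"
proof -
  have "P (v, s) = (\<Sum>k\<in>{0..K}. P (v, s(i := k))) * prb n Vs K P {\<omega>. snd \<omega> i = 0}"
    using conjunct1[OF info[unfolded info_assumption_def], rule_format, OF assms] .
  also have "prb n Vs K P {\<omega>. snd \<omega> i = 0} = 1 - lm"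
    by (rule prb_uninformed[OF assms(1)])
  also have "(\<Sum>k\<in>{0..K}. P (v, s(i := k))) = P (v, s) + (\<Sum>k\<in>{1..K}. P (v, s(i := k)))"
    using assms(3) by (subst sum.atLeast_Suc_atMost) (auto simp: fun_upd_idem)
  finally have "P (v, s) = (P (v, s) + (\<Sum>k\<in>{1..K}. P (v, s(i := k)))) * (1 - lm)" .
  then show ?thesis by argo
qed

lemma lam_power_mul_P:
  assumes "finite J" "J \<subseteq> uninformed n s" "(v, s) \<in> Om n Vs K"
  shows "lm ^ card J * P (v, s) = (1 - lm) ^ card J * (\<Sum>t\<in>informed_completions n K s J. P (v, t))"
  using assms
proof (induction J arbitrary: s rule: finite_induct)
  case empty
  then have "informed_completions n K s {} = {s}"
    unfolding informed_completions_def Om_def by auto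
  then show ?case by simp
next
  case (insert a J)
  have a: "a < n" "s a = 0" using insert.prems(1) by (auto simp: uninformed_def)
  have IH: "lm ^ card J * P (v, s(a := k))
      = (1 - lm) ^ card J * (\<Sum>t\<in>informed_completions n K (s(a := k)) J. P (v, t))"
    if "k \<in> {1..K}" for k
  proof (rule insert.IH)
    show "J \<subseteq> uninformed n (s(a := k))"
      using insert.prems(1) insert.hyps(2) by (auto simp: uninformed_def)
    show "(v, s(a := k)) \<in> Om n Vs K"
      using insert.prems(2) a(1) that by (auto simp: Om_def PiE_def Pi_def extensional_def)
  qed
  have "(\<Sum>t\<in>informed_completions n K s (insert a J). P (v, t))
      = (\<Sum>k\<in>{1..K}. \<Sum>t\<in>{t \<in> informed_completions n K s (insert a J). t a = k}. P (v, t))"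
  proof (rule sum.group[symmetric])
    show "(\<lambda>t. t a) ` informed_completions n K s (insert a J) \<subseteq> {1..K}"
      using a by (auto simp: informed_completions_def PiE_def Pi_def)
  qed (simp_all add: finite_informed_completions)
  also have "\<dots> = (\<Sum>k\<in>{1..K}. \<Sum>t\<in>informed_completions n K (s(a := k)) J. P (v, t))"
    using insert.hyps(2)
    by (intro sum.cong refl arg_cong2[where f = sum]) (auto simp: informed_completions_def)
  finally have split: "(\<Sum>t\<in>informed_completions n K s (insert a J). P (v, t))
      = (\<Sum>k\<in>{1..K}. \<Sum>t\<in>informed_completions n K (s(a := k)) J. P (v, t))" .
  have "lm ^ card (insert a J) * P (v, s) = lm ^ card J * (lm * P (v, s))"
    using insert.hyps by simp
  also have "\<dots> = (1 - lm) * (\<Sum>k\<in>{1..K}. lm ^ card J * P (v, s(a := k)))"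
    using lam_mul_P_uninformed[OF a(1) insert.prems(2) a(2)]
    by (simp add: sum_distrib_left algebra_simps)
  also have "\<dots>
      = (1 - lm) ^ card (insert a J) * (\<Sum>t\<in>informed_completions n K s (insert a J). P (v, t))"
    using insert.hyps by (simp add: IH split sum_distrib_left mult.assoc)
  finally show ?case .
qed

lemma lam_power_n_mul_P:
  assumes "\<omega> \<in> Om n Vs K"
  shows "lm ^ n * P \<omega>
       = silence_weight lm n (card (uninformed n (snd \<omega>))) * (\<Sum>t\<in>Cset n K (snd \<omega>). P (fst \<omega>, t))"
proof -
  obtain v s where \<omega>: "\<omega> = (v, s)" by fastforce
  define J where "J = uninformed n s"
  have "finite J" "card J \<le> n"
    unfolding J_def uninformed_def using card_mono[of "{..<n}" "{j. j < n \<and> s j = 0}"] by auto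
  have "lm ^ card J * P \<omega> = (1 - lm) ^ card J * (\<Sum>t\<in>Cset n K s. P (v, t))"
    using lam_power_mul_P[OF \<open>finite J\<close>, of s v] informed_completions_uninformed[of s n K] assms
    unfolding \<omega> J_def Om_def by auto
  moreover have "lm ^ n = lm ^ (n - card J) * lm ^ card J"
    using \<open>card J \<le> n\<close> by (simp flip: power_add)
  ultimately show ?thesis
    unfolding \<omega> J_def silence_weight_def by (simp add: mult.assoc)
qed

lemma prb_all_informed: "prb n Vs K P {\<omega>. \<forall>i<n. snd \<omega> i \<noteq> 0} = lm ^ n"
proof -
  have "lm ^ n = (\<Sum>\<omega>\<in>Om n Vs K. lm ^ n * P \<omega>)"
    using pmf by (simp add: is_pmf_def flip: sum_distrib_left)
  also have "\<dots> = (\<Sum>\<omega>\<in>Om n Vs K. silence_weight lm n (card (uninformed n (snd \<omega>)))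
                      * (\<Sum>t\<in>Cset n K (snd \<omega>). P (fst \<omega>, t)) * 1)"
    using lam_power_n_mul_P by (intro sum.cong) auto
  also have "\<dots> = (\<Sum>Z\<in>Pow {..<n}. silence_weight lm n (card Z) * (\<Sum>\<omega>\<in>Om_informed n Vs K. P \<omega> * 1))"
    by (rule sum_Om_Cset_eq_sum_silence[OF finite_Vs])
  also have "\<dots> = prb n Vs K P {\<omega>. \<forall>i<n. snd \<omega> i \<noteq> 0}"
    using sum_silence_weight_Pow[of "{..<n}" lm]
    by (simp add: prb_def Om_informed_def flip: sum_distrib_right)
  finally show ?thesis ..
qed

section \<open>The mixture representation\<close>

context
  assumes lam_pos: "0 < lm"
begin

lemma P_eq_PI: "\<omega> \<in> Om_informed n Vs K \<Longrightarrow> P \<omega> = lm ^ n * PI n Vs K P \<omega>"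
  unfolding PI_def prb_all_informed using lam_pos by (auto simp: Om_informed_def)

lemma sum_PI: "(\<Sum>\<omega>\<in>Om_informed n Vs K. PI n Vs K P \<omega>) = 1"
proof -
  have "lm ^ n = (\<Sum>\<omega>\<in>Om_informed n Vs K. P \<omega>)"
    using prb_all_informed by (simp add: prb_def Om_informed_def)
  also have "\<dots> = lm ^ n * (\<Sum>\<omega>\<in>Om_informed n Vs K. PI n Vs K P \<omega>)"
    by (simp add: P_eq_PI sum_distrib_left)
  finally have "lm ^ n = lm ^ n * (\<Sum>\<omega>\<in>Om_informed n Vs K. PI n Vs K P \<omega>)" .
  then show ?thesis using lam_pos by simp
qed

lemma P_eq_silence_weight_PI:
  assumes "\<omega> \<in> Om n Vs K"
  shows "P \<omega> = silence_weight lm n (card (uninformed n (snd \<omega>)))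
               * (\<Sum>s'\<in>Cset n K (snd \<omega>). PI n Vs K P (fst \<omega>, s'))"
proof -
  have "(fst \<omega>, s') \<in> Om_informed n Vs K" if "s' \<in> Cset n K (snd \<omega>)" for s'
    using assms that unfolding Cset_def Om_informed_def Om_def by (auto simp: PiE_def Pi_def)
  then have "(\<Sum>s'\<in>Cset n K (snd \<omega>). P (fst \<omega>, s'))
      = lm ^ n * (\<Sum>s'\<in>Cset n K (snd \<omega>). PI n Vs K P (fst \<omega>, s'))"
    by (simp add: P_eq_PI sum_distrib_left)
  then have "lm ^ n * P \<omega> = lm ^ n * (silence_weight lm n (card (uninformed n (snd \<omega>)))
               * (\<Sum>s'\<in>Cset n K (snd \<omega>). PI n Vs K P (fst \<omega>, s')))"
    using lam_power_n_mul_P[OF assms] by simp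
  then show ?thesis using lam_pos by simp
qed

lemma P_eq_lam_power_sum_PI:
  assumes "\<omega> \<in> Om n Vs K"
  shows "P \<omega> = lm ^ Msig n (snd \<omega>) * (1 - lm) ^ (n - Msig n (snd \<omega>))
               * (\<Sum>s'\<in>Cset n K (snd \<omega>). PI n Vs K P (fst \<omega>, s'))"
  using P_eq_silence_weight_PI[OF assms] silence_weight_uninformed by simp

lemma sum_mixture:
  "(\<Sum>\<omega>\<in>Om n Vs K. P \<omega> * f \<omega>)
   = (\<Sum>Z\<in>Pow {..<n}. silence_weight lm n (card Z)
        * (\<Sum>\<omega>\<in>Om_informed n Vs K. PI n Vs K P \<omega> * f (silence Z \<omega>)))" (is "_ = ?rhs")
proof -
  have "(\<Sum>\<omega>\<in>Om n Vs K. P \<omega> * f \<omega>)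
      = (\<Sum>\<omega>\<in>Om n Vs K. silence_weight lm n (card (uninformed n (snd \<omega>)))
                        * (\<Sum>s'\<in>Cset n K (snd \<omega>). PI n Vs K P (fst \<omega>, s')) * f \<omega>)"
    using P_eq_silence_weight_PI by (intro sum.cong) auto
  also have "\<dots> = ?rhs"
    by (rule sum_Om_Cset_eq_sum_silence[OF finite_Vs])
  finally show ?thesis .
qed

lemma sum_mixture_const:
  assumes "\<And>Z \<omega>. Z \<subseteq> {..<n} \<Longrightarrow> \<omega> \<in> Om_informed n Vs K \<Longrightarrow> f (silence Z \<omega>) = c Z"
  shows "(\<Sum>\<omega>\<in>Om n Vs K. P \<omega> * f \<omega>) = (\<Sum>Z\<in>Pow {..<n}. silence_weight lm n (card Z) * c Z)"
  unfolding sum_mixture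
proof (intro sum.cong refl)
  fix Z assume "Z \<in> Pow {..<n}"
  then have "(\<Sum>\<omega>\<in>Om_informed n Vs K. PI n Vs K P \<omega> * f (silence Z \<omega>))
      = (\<Sum>\<omega>\<in>Om_informed n Vs K. PI n Vs K P \<omega>) * c Z"
    using assms by (simp add: sum_distrib_right)
  then show "silence_weight lm n (card Z) * (\<Sum>\<omega>\<in>Om_informed n Vs K. PI n Vs K P \<omega> * f (silence Z \<omega>))
      = silence_weight lm n (card Z) * c Z"
    using sum_PI by simp
qed

lemma prb_Mcnt_uninformed:
  assumes "i < n"
  shows "prb n Vs K P ({\<omega>. Mcnt n i \<omega> = m} \<inter> {\<omega>. snd \<omega> i = 0})
       = real ((n - 1) choose m) * lm ^ m * (1 - lm) ^ (n - m)"
proof -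
  define S where "S = {Z \<in> Pow {..<n}. i \<in> Z \<and> card ({..<n} - {i} - Z) = m}"
  have card_S: "card Z = n - m" "m < n" if "Z \<in> S" for Z
    using card_by_complement_others[of Z n i m] that unfolding S_def by auto
  have "prb n Vs K P ({\<omega>. Mcnt n i \<omega> = m} \<inter> {\<omega>. snd \<omega> i = 0})
      = (\<Sum>Z\<in>Pow {..<n}. silence_weight lm n (card Z) * of_bool (Z \<in> S))"
    unfolding prb_eq_sum_of_bool[OF finite_Vs]
    by (rule sum_mixture_const)
      (use assms in \<open>auto simp: S_def Mcnt_silence snd_silence Om_informed_def\<close>)
  also have "\<dots> = (\<Sum>Z\<in>S. silence_weight lm n (card Z))"
    by (rule sum.mono_neutral_cong_right) (auto simp: S_def)
  also have "\<dots> = (\<Sum>Z\<in>S. lm ^ m * (1 - lm) ^ (n - m))"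
  proof (intro sum.cong refl)
    fix Z assume "Z \<in> S"
    then have "n - card Z = m" "card Z = n - m" using card_S[OF \<open>Z \<in> S\<close>] by auto
    then show "silence_weight lm n (card Z) = lm ^ m * (1 - lm) ^ (n - m)"
      unfolding silence_weight_def by simp
  qed
  also have "\<dots> = real (card S) * (lm ^ m * (1 - lm) ^ (n - m))"
    by simp
  also have "card S = (n - 1) choose m"
    using card_Pow_member_complement[of "{..<n}" i m] assms unfolding S_def by simp
  finally show ?thesis by simp
qed

(* For lm = 1 both sides are 0, since x / 0 = 0. *)
lemma cprob_Mcnt_uninformed:
  assumes "i < n"
  shows "cprob n Vs K P {\<omega>. Mcnt n i \<omega> = m} {\<omega>. snd \<omega> i = 0}
       = real ((n - 1) choose m) * lm ^ m * (1 - lm) ^ (n - m) / (1 - lm)"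
  unfolding cprob_def prb_Mcnt_uninformed[OF assms] prb_uninformed[OF assms] ..

lemma sum_silence_weight_not_member:
  assumes "j < n"
  shows "(\<Sum>Z\<in>Pow {..<n}. silence_weight lm n (card Z) * of_bool (j \<notin> Z)) = lm"
proof -
  have "lm = (\<Sum>\<omega>\<in>Om n Vs K. P \<omega> * of_bool (\<omega> \<in> {\<omega>. snd \<omega> j \<noteq> 0}))"
    using prb_informed[OF assms] prb_eq_sum_of_bool[OF finite_Vs] by simp
  also have "\<dots> = (\<Sum>Z\<in>Pow {..<n}. silence_weight lm n (card Z) * of_bool (j \<notin> Z))"
    by (rule sum_mixture_const) (use assms in \<open>auto simp: snd_silence Om_informed_def\<close>)
  finally show ?thesis ..
qed

lemma sum_mixture_signal:
  assumes "j < n" "k \<noteq> 0" "\<And>Z \<omega>. h (silence Z \<omega>) = h \<omega>"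
  shows "(\<Sum>\<omega>\<in>Om n Vs K. P \<omega> * (of_bool (snd \<omega> j = k) * h \<omega>))
       = lm * (\<Sum>\<omega>\<in>Om_informed n Vs K. PI n Vs K P \<omega> * (of_bool (snd \<omega> j = k) * h \<omega>))"
proof -
  let ?E = "\<Sum>\<omega>\<in>Om_informed n Vs K. PI n Vs K P \<omega> * (of_bool (snd \<omega> j = k) * h \<omega>)"
  have "of_bool (snd (silence Z \<omega>) j = k) * h (silence Z \<omega>)
      = of_bool (j \<notin> Z) * (of_bool (snd \<omega> j = k) * h \<omega>)" for Z \<omega>
    using assms(2,3) by (simp add: snd_silence)
  then have "(\<Sum>\<omega>\<in>Om n Vs K. P \<omega> * (of_bool (snd \<omega> j = k) * h \<omega>))
      = (\<Sum>Z\<in>Pow {..<n}. silence_weight lm n (card Z) * of_bool (j \<notin> Z) * ?E)"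
    unfolding sum_mixture by (simp add: sum_distrib_left mult.assoc mult.left_commute)
  also have "\<dots> = lm * ?E"
    using sum_silence_weight_not_member[OF assms(1)] by (simp flip: sum_distrib_right)
  finally show ?thesis .
qed

lemma cexp_signal:
  assumes "j < n" "k \<noteq> 0"
  shows "cexp n Vs K P (Vd j) {\<omega>. snd \<omega> j = k}
       = (\<Sum>\<omega>\<in>Om_informed n Vs K. PI n Vs K P \<omega> * (of_bool (snd \<omega> j = k) * Vd j \<omega>))
         / (\<Sum>\<omega>\<in>Om_informed n Vs K. PI n Vs K P \<omega> * of_bool (snd \<omega> j = k))"
proof -
  have "prb n Vs K P {\<omega>. snd \<omega> j = k} = (\<Sum>\<omega>\<in>Om n Vs K \<inter> {\<omega>. snd \<omega> j = k}. P \<omega> * 1)"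
    by (simp add: prb_def)
  also have "\<dots> = lm * (\<Sum>\<omega>\<in>Om_informed n Vs K. PI n Vs K P \<omega> * (of_bool (snd \<omega> j = k) * 1))"
    unfolding sum_Om_Int_eq[OF finite_Vs] mem_Collect_eq by (rule sum_mixture_signal[OF assms]) simp
  finally have den: "prb n Vs K P {\<omega>. snd \<omega> j = k}
      = lm * (\<Sum>\<omega>\<in>Om_informed n Vs K. PI n Vs K P \<omega> * of_bool (snd \<omega> j = k))" by simp
  show ?thesis
    unfolding cexp_def den sum_Om_Int_eq[OF finite_Vs] mem_Collect_eq
      sum_mixture_signal[where h = "Vd j", OF assms Vd_silence]
    using lam_pos by simp
qed

lemma sum_mixture_card:
  assumes "\<And>Z \<omega>. Z \<subseteq> {..<n} \<Longrightarrow> \<omega> \<in> Om_informed n Vs K \<Longrightarrow> card Z \<noteq> k \<Longrightarrow> f (silence Z \<omega>) = 0"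
  shows "(\<Sum>\<omega>\<in>Om n Vs K. P \<omega> * f \<omega>)
       = silence_weight lm n k * silenced_sum n Vs K (PI n Vs K P) {..<n} f"
  unfolding sum_mixture silenced_sum_def
  by (rule sum_Pow_factor_card[where w = "silence_weight lm n"
      and F = "\<lambda>Z. \<Sum>\<omega>\<in>Om_informed n Vs K. PI n Vs K P \<omega> * f (silence Z \<omega>)"])
    (use assms in \<open>auto intro!: sum.neutral\<close>)

lemma sum_mixture_others:
  assumes "i < n" and own: "\<And>v s t. f (v, s(i := t)) = f (v, s)"
  shows "(\<Sum>\<omega>\<in>Om n Vs K. P \<omega> * f \<omega>)
       = (\<Sum>Z\<in>Pow ({..<n} - {i}). silence_weight lm (n - 1) (card Z)
            * (\<Sum>\<omega>\<in>Om_informed n Vs K. PI n Vs K P \<omega> * f (silence Z \<omega>)))"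
proof -
  define A where "A = {..<n} - {i}"
  define F where "F Z = (\<Sum>\<omega>\<in>Om_informed n Vs K. PI n Vs K P \<omega> * f (silence Z \<omega>))" for Z
  have A: "finite A" "i \<notin> A" "{..<n} = insert i A" "card A = n - 1"
    using assms(1) by (auto simp: A_def)
  have F_insert: "F (insert i Z) = F Z" for Z
    unfolding F_def silence_insert using own by (metis prod.collapse)
  have "(\<Sum>\<omega>\<in>Om n Vs K. P \<omega> * f \<omega>) = (\<Sum>Z\<in>Pow (insert i A). silence_weight lm n (card Z) * F Z)"
    unfolding sum_mixture F_def A(3) ..
  also have "\<dots> = (\<Sum>Z\<in>Pow A. silence_weight lm n (card Z) * F Z)
                  + (\<Sum>Z\<in>insert i ` Pow A. silence_weight lm n (card Z) * F Z)"
    unfolding Pow_insert by (rule sum.union_disjoint) (use A in auto)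
  also have "(\<Sum>Z\<in>insert i ` Pow A. silence_weight lm n (card Z) * F Z)
      = (\<Sum>Z\<in>Pow A. silence_weight lm n (card (insert i Z)) * F (insert i Z))"
    by (rule sum.reindex_cong[where l = "insert i"]) (use A in \<open>auto simp: inj_on_def insert_ident\<close>)
  also have "(\<Sum>Z\<in>Pow A. silence_weight lm n (card Z) * F Z)
      + (\<Sum>Z\<in>Pow A. silence_weight lm n (card (insert i Z)) * F (insert i Z))
      = (\<Sum>Z\<in>Pow A. silence_weight lm (n - 1) (card Z) * F Z)"
    unfolding sum.distrib[symmetric]
  proof (intro sum.cong refl)
    fix Z assume "Z \<in> Pow A"
    then have "finite Z" "i \<notin> Z" "card Z < n"
      using A card_mono[of A Z] finite_subset[of Z A] assms(1) by auto
    then show "silence_weight lm n (card Z) * F Z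
        + silence_weight lm n (card (insert i Z)) * F (insert i Z)
        = silence_weight lm (n - 1) (card Z) * F Z"
      using silence_weight_add_Suc[of "card Z" n lm] by (simp add: F_insert flip: distrib_right)
  qed
  finally show ?thesis unfolding A_def F_def .
qed

lemma sum_mixture_others_card:
  assumes "i < n" "\<And>v s t. f (v, s(i := t)) = f (v, s)"
    and "\<And>Z \<omega>. Z \<subseteq> {..<n} - {i} \<Longrightarrow> \<omega> \<in> Om_informed n Vs K \<Longrightarrow> card Z \<noteq> k \<Longrightarrow> f (silence Z \<omega>) = 0"
  shows "(\<Sum>\<omega>\<in>Om n Vs K. P \<omega> * f \<omega>)
       = silence_weight lm (n - 1) k * silenced_sum n Vs K (PI n Vs K P) ({..<n} - {i}) f"
  unfolding sum_mixture_others[where f = f, OF assms(1,2)] silenced_sum_def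
  by (rule sum_Pow_factor_card[where w = "silence_weight lm (n - 1)"
      and F = "\<lambda>Z. \<Sum>\<omega>\<in>Om_informed n Vs K. PI n Vs K P \<omega> * f (silence Z \<omega>)"])
    (use assms(3) in \<open>auto intro!: sum.neutral\<close>)

lemma Zfun_eq_silenced_sums:
  assumes "i < n" "lm < 1"
  shows "Zfun n Vs K P i g m
    = silenced_sum n Vs K (PI n Vs K P) ({..<n} - {i})
        (\<lambda>\<omega>. of_bool (Gcnt n Vs K P i \<omega> = g \<and> Mcnt n i \<omega> = m))
      / silenced_sum n Vs K (PI n Vs K P) ({..<n} - {i}) (\<lambda>\<omega>. of_bool (Mcnt n i \<omega> = m))
      * (silenced_sum n Vs K (PI n Vs K P) {..<n} (\<lambda>\<omega>. of_bool (\<omega> \<in> Ev n Vs K P i g m) * Vd i \<omega>)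
         / silenced_sum n Vs K (PI n Vs K P) {..<n} (\<lambda>\<omega>. of_bool (\<omega> \<in> Ev n Vs K P i g m)))"
proof -
  have weight_nonzero: "silence_weight lm k j \<noteq> 0" for k j
    using lam_pos assms(2) by (simp add: silence_weight_def)
  have card_others: "card Z = n - 1 - m"
    if "Z \<subseteq> {..<n} - {i}" "\<omega> \<in> Om_informed n Vs K" "Mcnt n i (silence Z \<omega>) = m" for Z \<omega>
  proof -
    have "{..<n} - {i} - insert i Z = {..<n} - {i} - Z" "finite Z" "i \<notin> Z" "Z \<subseteq> {..<n}"
      using that(1) finite_subset[of Z "{..<n}"] by auto
    moreover have "card (insert i Z) = n - m"
      using card_by_complement_others(1)[of "insert i Z" n i m] calculation that assms(1)
      by (simp add: Mcnt_silence)
    ultimately show ?thesis by simp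
  qed
  have card_all: "card Z = n - m"
    if "Z \<subseteq> {..<n}" "\<omega> \<in> Om_informed n Vs K" "silence Z \<omega> \<in> Ev n Vs K P i g m" for Z \<omega>
  proof -
    have "i \<in> Z"
      using that(2,3) assms(1) by (auto simp: Ev_def snd_silence Om_informed_def split: if_splits)
    then show ?thesis
      using card_by_complement_others(1)[OF that(1)] that(3) Mcnt_silence[OF that(2)]
      by (simp add: Ev_def)
  qed
  have num1: "prb n Vs K P ({\<omega>. Gcnt n Vs K P i \<omega> = g} \<inter> {\<omega>. Mcnt n i \<omega> = m})
      = silence_weight lm (n - 1) (n - 1 - m) * silenced_sum n Vs K (PI n Vs K P) ({..<n} - {i})
          (\<lambda>\<omega>. of_bool (Gcnt n Vs K P i \<omega> = g \<and> Mcnt n i \<omega> = m))"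
    unfolding prb_eq_sum_of_bool[OF finite_Vs] Int_iff mem_Collect_eq
    by (rule sum_mixture_others_card[OF assms(1)])
      (auto simp: Gcnt_fun_upd_self Mcnt_fun_upd_self dest: card_others)
  have den1: "prb n Vs K P {\<omega>. Mcnt n i \<omega> = m}
      = silence_weight lm (n - 1) (n - 1 - m) * silenced_sum n Vs K (PI n Vs K P) ({..<n} - {i})
          (\<lambda>\<omega>. of_bool (Mcnt n i \<omega> = m))"
    unfolding prb_eq_sum_of_bool[OF finite_Vs] mem_Collect_eq
    by (rule sum_mixture_others_card[OF assms(1)]) (auto simp: Mcnt_fun_upd_self dest: card_others)
  have num2: "(\<Sum>\<omega>\<in>Om n Vs K \<inter> Ev n Vs K P i g m. P \<omega> * Vd i \<omega>)
      = silence_weight lm n (n - m) * silenced_sum n Vs K (PI n Vs K P) {..<n}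
          (\<lambda>\<omega>. of_bool (\<omega> \<in> Ev n Vs K P i g m) * Vd i \<omega>)"
    unfolding sum_Om_Int_eq[OF finite_Vs] by (rule sum_mixture_card) (auto dest: card_all)
  have den2: "prb n Vs K P (Ev n Vs K P i g m)
      = silence_weight lm n (n - m) * silenced_sum n Vs K (PI n Vs K P) {..<n}
          (\<lambda>\<omega>. of_bool (\<omega> \<in> Ev n Vs K P i g m))"
    unfolding prb_eq_sum_of_bool[OF finite_Vs] by (rule sum_mixture_card) (auto dest: card_all)
  show ?thesis
    unfolding Zfun_def cprob_def cexp_def num1 den1 num2 den2 using weight_nonzero by simp
qed

end

section \<open>Pivot probabilities\<close>

lemma cexp_permute_state:
  assumes "p permutes {..<n}"
  shows "cexp n Vs K P (Vd (p j)) {\<omega>. snd \<omega> (p j) = k} = cexp n Vs K P (Vd j) {\<omega>. snd \<omega> j = k}"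
proof -
  have E: "{\<omega>. permute_state p \<omega> \<in> {\<omega>. snd \<omega> j = k}} = {\<omega>. snd \<omega> (p j) = k}"
    by (auto simp: permute_state_def)
  have V: "Vd j (permute_state p \<omega>) = Vd (p j) \<omega>" for \<omega>
    by (simp add: Vd_def permute_state_def)
  show ?thesis
    unfolding cexp_def sum_permute_state[OF assms, where E = "{\<omega>. snd \<omega> j = k}" and f = "Vd j"]
      prb_permute_state[OF assms, of "{\<omega>. snd \<omega> j = k}"] E V ..
qed

lemma good_news_permute:
  assumes "p permutes {..<n}"
  shows "good_news n Vs K P (p j) k = good_news n Vs K P j k"
  unfolding good_news_def cexp_permute_state[OF assms] ..

lemma Gcnt_permute_state:
  assumes "p permutes ({..<n} - {i})"
  shows "Gcnt n Vs K P i (permute_state p \<omega>) = Gcnt n Vs K P i \<omega>"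
proof -
  have p: "p permutes {..<n}" using assms by (rule permutes_subset) auto
  have "{j. j < n \<and> j \<noteq> i \<and> good_news n Vs K P j (snd (permute_state p \<omega>) j)}
      = {j \<in> {..<n} - {i}. good_news n Vs K P (p j) (snd \<omega> (p j))}"
    by (auto simp: permute_state_def good_news_permute[OF p])
  moreover have "{j. j < n \<and> j \<noteq> i \<and> good_news n Vs K P j (snd \<omega> j)}
      = {j \<in> {..<n} - {i}. good_news n Vs K P j (snd \<omega> j)}" by auto
  ultimately show ?thesis
    unfolding Gcnt_def
    using card_Collect_permutes[OF assms, of "\<lambda>j. good_news n Vs K P j (snd \<omega> j)"] by simp
qed

lemma Ev_permute_state:
  assumes "p permutes ({..<n} - {i})"
  shows "permute_state p \<omega> \<in> Ev n Vs K P i g m \<longleftrightarrow> \<omega> \<in> Ev n Vs K P i g m"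
proof -
  have "p i = i" using assms by (simp add: permutes_not_in)
  then show ?thesis
    unfolding Ev_def using Gcnt_permute_state[OF assms] Mcnt_permute_state[OF assms]
    by (simp add: permute_state_def)
qed

lemma prb_Ev_uninformed_eq:
  assumes "Y \<subseteq> {..<n} - {i}" "Y' \<subseteq> {..<n} - {i}" "card Y = card Y'"
  shows "prb n Vs K P (Ev n Vs K P i g m \<inter> {\<omega>. uninformed n (snd \<omega>) - {i} = Y})
       = prb n Vs K P (Ev n Vs K P i g m \<inter> {\<omega>. uninformed n (snd \<omega>) - {i} = Y'})"
proof -
  obtain p where p: "p permutes ({..<n} - {i})" "p ` Y = Y'"
    using permutes_exists_image[OF _ assms] by blast
  have "{\<omega>. permute_state p \<omega> \<in> Ev n Vs K P i g m \<inter> {\<omega>. uninformed n (snd \<omega>) - {i} = Y}}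
      = Ev n Vs K P i g m \<inter> {\<omega>. uninformed n (snd \<omega>) - {i} = Y'}"
  proof -
    have "uninformed n (snd (permute_state p \<omega>)) - {i} = Y \<longleftrightarrow> uninformed n (snd \<omega>) - {i} = Y'" for \<omega>
      using inj_image_eq_iff[OF permutes_inj[OF p(1)]] uninformed_permute_state[OF p(1)] p(2)
      by metis
    then show ?thesis using Ev_permute_state[OF p(1)] by auto
  qed
  moreover have "p permutes {..<n}" using p(1) by (rule permutes_subset) auto
  ultimately show ?thesis using prb_permute_state by metis
qed

lemma sum_Ev_by_uninformed_others:
  assumes "i < n" "Y0 \<subseteq> {..<n} - {i}" "card Y0 = n - 1 - m"
  shows "(\<Sum>\<omega>\<in>Om n Vs K \<inter> Ev n Vs K P i g m. P \<omega> * F (uninformed n (snd \<omega>) - {i}))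
       = prb n Vs K P (Ev n Vs K P i g m \<inter> {\<omega>. uninformed n (snd \<omega>) - {i} = Y0})
         * (\<Sum>Y\<in>{Y. Y \<subseteq> {..<n} - {i} \<and> card Y = n - 1 - m}. F Y)"
proof -
  define S where "S = {Y. Y \<subseteq> {..<n} - {i} \<and> card Y = n - 1 - m}"
  define E where "E = Ev n Vs K P i g m"
  define U where "U \<omega> = uninformed n (snd \<omega>) - {i}" for \<omega> :: state
  have "finite S" unfolding S_def by (rule finite_subset[of _ "Pow ({..<n} - {i})"]) auto
  have U_in_S: "U \<omega> \<in> S" if "\<omega> \<in> E" for \<omega>
    using that card_uninformed_others[OF assms(1), of \<omega>] unfolding S_def E_def Ev_def U_def
    by (auto simp: uninformed_def)
  have "(\<Sum>\<omega>\<in>Om n Vs K \<inter> E. P \<omega> * F (U \<omega>))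
      = (\<Sum>Y\<in>S. \<Sum>\<omega>\<in>{\<omega> \<in> Om n Vs K \<inter> E. U \<omega> = Y}. P \<omega> * F (U \<omega>))"
    by (rule sum.group[symmetric]) (use finite_Om[OF finite_Vs] \<open>finite S\<close> U_in_S in auto)
  also have "\<dots> = (\<Sum>Y\<in>S. F Y * prb n Vs K P (E \<inter> {\<omega>. U \<omega> = Y}))"
    unfolding prb_def
    by (intro sum.cong refl) (auto simp: sum_distrib_left mult.commute intro!: sum.cong)
  also have "\<dots> = (\<Sum>Y\<in>S. F Y * prb n Vs K P (E \<inter> {\<omega>. U \<omega> = Y0}))"
  proof (intro sum.cong refl)
    fix Y assume "Y \<in> S"
    then show "F Y * prb n Vs K P (E \<inter> {\<omega>. U \<omega> = Y}) = F Y * prb n Vs K P (E \<inter> {\<omega>. U \<omega> = Y0})"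
      using prb_Ev_uninformed_eq[of Y i Y0 g m] assms(2,3) unfolding S_def E_def U_def by simp
  qed
  finally show ?thesis
    unfolding S_def E_def U_def by (simp add: sum_distrib_right mult.commute)
qed

lemma pivot_prob_eq_average:
  assumes "i < n" "g \<le> tau n" "prb n Vs K P (Ev n Vs K P i g m) > 0"
  shows "pivot_prob n Vs K P \<sigma> i g m
     = (\<Sum>Y\<in>{Y. Y \<subseteq> {..<n} - {i} \<and> card Y = n - 1 - m}. exact_yes \<sigma> Y (tau n - g))
       / card {Y. Y \<subseteq> {..<n} - {i} \<and> card Y = n - 1 - m}"
proof -
  define E where "E = Ev n Vs K P i g m"
  define U where "U \<omega> = uninformed n (snd \<omega>) - {i}" for \<omega> :: state
  have "Om n Vs K \<inter> E \<noteq> {}" using assms(3) unfolding prb_def E_def by auto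
  then obtain \<omega>0 where "\<omega>0 \<in> Om n Vs K \<inter> E" by blast
  then have Y0: "U \<omega>0 \<subseteq> {..<n} - {i}" "card (U \<omega>0) = n - 1 - m"
    using card_uninformed_others[OF assms(1), of \<omega>0] unfolding U_def E_def Ev_def
    by (auto simp: uninformed_def)
  define c where "c = prb n Vs K P (E \<inter> {\<omega>. U \<omega> = U \<omega>0})"
  note by_U = sum_Ev_by_uninformed_others[where g = g, OF assms(1) Y0[unfolded U_def],
      folded E_def U_def, folded c_def]
  have den: "prb n Vs K P E = c * card {Y. Y \<subseteq> {..<n} - {i} \<and> card Y = n - 1 - m}"
    using by_U[of "\<lambda>_. 1"] unfolding prb_def by simp
  with assms(3) have "c \<noteq> 0" unfolding E_def by auto
  have "(\<Sum>\<omega>\<in>Om n Vs K \<inter> E. P \<omega> * (if Gcnt n Vs K P i \<omega> \<le> tau n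
          then exact_yes \<sigma> {j. j < n \<and> j \<noteq> i \<and> snd \<omega> j = 0} (tau n - Gcnt n Vs K P i \<omega>) else 0))
      = (\<Sum>\<omega>\<in>Om n Vs K \<inter> E. P \<omega> * exact_yes \<sigma> (U \<omega>) (tau n - g))"
    using assms(2) unfolding E_def Ev_def U_def uninformed_def
    by (intro sum.cong refl) (auto intro!: arg_cong2[where f = "exact_yes \<sigma>"])
  also have "\<dots> = c * (\<Sum>Y\<in>{Y. Y \<subseteq> {..<n} - {i} \<and> card Y = n - 1 - m}. exact_yes \<sigma> Y (tau n - g))"
    using by_U[of "\<lambda>Y. exact_yes \<sigma> Y (tau n - g)"] by simp
  finally show ?thesis
    unfolding pivot_prob_def E_def[symmetric] den using \<open>c \<noteq> 0\<close> by simp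
qed

end

lemma good_news_eq_if_PI_eq:
  assumes "signal_model n Vs K P" "signal_model n Vs K P'" "0 < lam n Vs K P" "0 < lam n Vs K P'"
    and "\<forall>\<omega>\<in>Om n Vs K. PI n Vs K P' \<omega> = PI n Vs K P \<omega>" "j < n"
  shows "good_news n Vs K P' j k = good_news n Vs K P j k"
proof (cases "k = 0")
  case False
  have "(\<Sum>\<omega>\<in>Om_informed n Vs K. PI n Vs K P' \<omega> * f \<omega>)
      = (\<Sum>\<omega>\<in>Om_informed n Vs K. PI n Vs K P \<omega> * f \<omega>)" for f
    using assms(5) by (intro sum.cong) (auto simp: Om_informed_def)
  then show ?thesis
    unfolding good_news_def signal_model.cexp_signal[OF assms(1,3,6) False]
      signal_model.cexp_signal[OF assms(2,4,6) False] by simp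
qed (simp add: good_news_def)

lemma Zfun_eq_if_PI_eq:
  assumes "signal_model n Vs K P" "signal_model n Vs K P'"
    and "0 < lam n Vs K P" "lam n Vs K P < 1" "0 < lam n Vs K P'" "lam n Vs K P' < 1"
    and PI_eq: "\<forall>\<omega>\<in>Om n Vs K. PI n Vs K P' \<omega> = PI n Vs K P \<omega>" and "i < n"
  shows "Zfun n Vs K P' i g m = Zfun n Vs K P i g m"
proof -
  have "Gcnt n Vs K P' i \<omega> = Gcnt n Vs K P i \<omega>" for \<omega>
    unfolding Gcnt_def using good_news_eq_if_PI_eq[OF assms(1,2,3,5) PI_eq]
    by (intro arg_cong[where f = card] Collect_cong) auto
  then have Gcnt_eq: "Gcnt n Vs K P' i = Gcnt n Vs K P i" ..
  then have Ev_eq: "Ev n Vs K P' i g m = Ev n Vs K P i g m" unfolding Ev_def by simp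
  show ?thesis
    unfolding signal_model.Zfun_eq_silenced_sums[OF assms(1,3,8,4)]
      signal_model.Zfun_eq_silenced_sums[OF assms(2,5,8,6)] Gcnt_eq Ev_eq
      silenced_sum_cong[OF PI_eq] ..
qed

theorem lemma1:
  fixes n K :: nat and Vs :: "(real \<times> real) set" and P :: "state \<Rightarrow> real"
  assumes "odd n"
    and "finite Vs"
    and "is_pmf n Vs K P"
    and "exchangeable n Vs K P"
    and "info_assumption n Vs K P"
    and "lam n Vs K P > 0"
  shows
   "(\<forall>\<omega>\<in>Om n Vs K.
        P \<omega> = lam n Vs K P ^ Msig n (snd \<omega>) * (1 - lam n Vs K P) ^ (n - Msig n (snd \<omega>))
               * (\<Sum>s'\<in>Cset n K (snd \<omega>). PI n Vs K P (fst \<omega>, s')))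
    \<and> (\<forall>\<sigma> i g m. (\<forall>j<n. 0 \<le> \<sigma> j \<and> \<sigma> j \<le> 1) \<longrightarrow> i < n \<longrightarrow>
          g \<le> tau n \<longrightarrow> g \<le> m \<longrightarrow> m \<le> tau n + g \<longrightarrow>
         (\<forall>P'. is_pmf n Vs K P' \<and> exchangeable n Vs K P' \<and> info_assumption n Vs K P' \<longrightarrow>
            (lam n Vs K P' = lam n Vs K P \<longrightarrow>
               cprob n Vs K P' {\<omega>. Mcnt n i \<omega> = m} {\<omega>. snd \<omega> i = 0}
               = cprob n Vs K P {\<omega>. Mcnt n i \<omega> = m} {\<omega>. snd \<omega> i = 0})
          \<and> (prb n Vs K P (Ev n Vs K P i g m) > 0 \<and> prb n Vs K P' (Ev n Vs K P' i g m) > 0 \<longrightarrow>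
               pivot_prob n Vs K P' \<sigma> i g m = pivot_prob n Vs K P \<sigma> i g m)
          \<and> (lam n Vs K P < 1 \<and> 0 < lam n Vs K P' \<and> lam n Vs K P' < 1
               \<and> (\<forall>\<omega>\<in>Om n Vs K. PI n Vs K P' \<omega> = PI n Vs K P \<omega>) \<longrightarrow>
               Zfun n Vs K P' i g m = Zfun n Vs K P i g m)))"
proof -
  have "0 < n" using \<open>odd n\<close> by (rule odd_pos)
  then have model: "signal_model n Vs K P"
    using assms by (auto intro: signal_model.intro)
  have model': "signal_model n Vs K P'"
    if "is_pmf n Vs K P' \<and> exchangeable n Vs K P' \<and> info_assumption n Vs K P'" for P'
    using assms that \<open>0 < n\<close> by (auto intro: signal_model.intro)
  show ?thesis
  proof (intro conjI ballI allI impI, goal_cases)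
    case (1 \<omega>)
    then show ?case by (rule signal_model.P_eq_lam_power_sum_PI[OF model assms(6)])
  next
    case (2 \<sigma> i g m P')
    then have "0 < lam n Vs K P'" using assms(6) by simp
    then show ?case
      using 2 signal_model.cprob_Mcnt_uninformed[OF model'[OF 2(6)] _ 2(2)]
        signal_model.cprob_Mcnt_uninformed[OF model assms(6) 2(2)] by simp
  next
    case (3 \<sigma> i g m P')
    then show ?case
      using signal_model.pivot_prob_eq_average[OF model'[OF 3(6)] 3(2,3)]
        signal_model.pivot_prob_eq_average[OF model 3(2,3)] by simp
  next
    case (4 \<sigma> i g m P')
    then show ?case using Zfun_eq_if_PI_eq[OF model model'[OF 4(6)] assms(6)] by blast
  qed
qed

end
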